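(* Consider Matching Pennies in the unconstrained setting with the Euclidean regularizer, and suppose both players use OFTRL (optimistic weight $n=1$) with any time delay $m\ge 1$, started from an initial condition that is not the equilibrium (i.e. $(\Delta x_1^1,\Delta x_2^1)\neq(0,0)$ where $\Delta x_i^t=\langle\boldsymbol{x}_i^t,\mathbf{c}\rangle$). Then with learning rate $\eta=O(1/\sqrt{T})$ (sufficiently small), the total regret satisfies $\textsc{RegTot}(T)=\Omega(\sqrt{T})$, treating the size $D$ of the comparator set as a constant.
   Context: Matching Pennies: two players with $\boldsymbol{u}_1=\boldsymbol{A}\boldsymbol{x}_2$, $\boldsymbol{u}_2=-\boldsymbol{A}^{\rm T}\boldsymbol{x}_1$, $\boldsymbol{A}=\begin{pmatrix}1&-1\\-1&1\end{pmatrix}=\mathbf{c}\mathbf{c}^{\rm T}$, $\mathbf{c}=(1,-1)^{\rm T}$. Unconstrained setting: strategies $\boldsymbol{x}_i\in\mathbb{R}^2$. Euclidean regularizer $h(\boldsymbol{x})=\|\boldsymbol{x}\|_2^2/2$. Time-delayed weighted optimistic FTRL with delay $m\in\mathbb{N}$ and weight $n\in\mathbb{N}$ (OFTRL is the case $n=1$): with $\boldsymbol{u}_i^t=\boldsymbol{u}_i(\boldsymbol{x}^t)$ for $t\ge1$ and $\boldsymbol{u}_i^t=\boldsymbol{0}$ for $t\le0$, the strategies evolve by $\boldsymbol{x}_i^{t+1}=\boldsymbol{x}_i^{t}+\eta\boldsymbol{u}_i^{t-m}+n\eta(\boldsymbol{u}_i^{t-m}-\boldsymbol{u}_i^{t-m-1})$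 (the unconstrained Euclidean form of $\boldsymbol{x}_i^{t+1}=\arg\max_{\boldsymbol{x}}\eta\langle\boldsymbol{x},\sum_{s=1}^{t-m}\boldsymbol{u}_i^s+n\boldsymbol{u}_i^{t-m}\rangle-h(\boldsymbol{x})$). Total regret: $\textsc{RegTot}(T)=\max_{\boldsymbol{x}}\sum_{i=1,2}\sum_{t=1}^{T}\langle\boldsymbol{x}_i-\boldsymbol{x}_i^t,\boldsymbol{u}_i^t\rangle$, where in the unconstrained setting the comparator $\boldsymbol{x}_i$ ranges over $\{\boldsymbol{x}_i:\|\boldsymbol{x}_i\|_1\le \frac1T\sum_{t=1}^T\|\boldsymbol{x}_i^t\|_1\}$, and $D:=\min_{i}\|\boldsymbol{x}_i\|_1$ for the maximizing comparator. *)

theory Defs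
  imports "HOL-Analysis.Analysis"
begin

text \<open>Matching Pennies, unconstrained setting, Euclidean regularizer.\<close>

definition cvec :: "real^2" where
  "cvec = vector [1, -1]"

definition Amat :: "real^2^2" where
  "Amat = (\<chi> i j. cvec $ i * cvec $ j)"

definition util1 :: "real^2 \<Rightarrow> real^2 \<Rightarrow> real^2" where
  "util1 x1 x2 = Amat *v x2"

definition util2 :: "real^2 \<Rightarrow> real^2 \<Rightarrow> real^2" where
  "util2 x1 x2 = - (transpose Amat *v x1)"

definition l1norm :: "real^2 \<Rightarrow> real" where
  "l1norm x = (\<Sum>i\<in>UNIV. \<bar>x $ i\<bar>)"

text \<open>Time-delayed weighted OFTRL (unconstrained Euclidean form), delay m, weight n,
  learning rate eta, initial strategies (a,b) at time t = 1:
  x^{t+1} = x^t + eta u^{t-m} + n eta (u^{t-m} - u^{t-m-1}), with u^k = 0 for k \<le> 0.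
  Here t \<le> 1 returns the initial condition (t = 0 is unused).\<close>
function oftrl_traj :: "nat \<Rightarrow> nat \<Rightarrow> real \<Rightarrow> real^2 \<Rightarrow> real^2 \<Rightarrow> nat \<Rightarrow> (real^2) \<times> (real^2)"
  where
  "oftrl_traj m n eta a b t =
    (if t \<le> 1 then (a, b) else
      (let s = t - 1;
           xs = oftrl_traj m n eta a b s;
           g = (if m < s then oftrl_traj m n eta a b (s - m) else (0, 0));
           h = (if m + 1 < s then oftrl_traj m n eta a b (s - m - 1) else (0, 0));
           g1 = (if m < s then util1 (fst g) (snd g) else 0);
           g2 = (if m < s then util2 (fst g) (snd g) else 0);
           h1 = (if m + 1 < s then util1 (fst h) (snd h) else 0);
           h2 = (if m + 1 < s then util2 (fst h) (snd h) else 0)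
       in (fst xs + eta *\<^sub>R g1 + (real n * eta) *\<^sub>R (g1 - h1),
           snd xs + eta *\<^sub>R g2 + (real n * eta) *\<^sub>R (g2 - h2))))"
  by pat_completeness auto
termination
  by (relation "Wellfounded.measure (\<lambda>(m, n, eta, a, b, t). t)") auto

definition RegTot :: "nat \<Rightarrow> nat \<Rightarrow> real \<Rightarrow> real^2 \<Rightarrow> real^2 \<Rightarrow> nat \<Rightarrow> real" where
  "RegTot m n eta a b T =
    (let X1 = (\<lambda>t. fst (oftrl_traj m n eta a b t));
         X2 = (\<lambda>t. snd (oftrl_traj m n eta a b t));
         U1 = (\<lambda>t. util1 (X1 t) (X2 t));
         U2 = (\<lambda>t. util2 (X1 t) (X2 t));
         R1 = (\<Sum>t=1..T. l1norm (X1 t)) / real T;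
         R2 = (\<Sum>t=1..T. l1norm (X2 t)) / real T
     in Sup {(\<Sum>t=1..T. (y1 - X1 t) \<bullet> U1 t) + (\<Sum>t=1..T. (y2 - X2 t) \<bullet> U2 t) |
               y1 y2. l1norm y1 \<le> R1 \<and> l1norm y2 \<le> R2})"

end

theory Submission
  imports Defs
begin

(*
  Write Z k = <x_1^(k+1), c> + i <x_2^(k+1), c>.  Both utilities are rank one along c, so
  weight-one OFTRL with delay m is the scalar recursion
    Z (k + 1) = Z k - 2 i eta (2 Z (k - m) - Z (k - m - 1)) = Z k - 2 i eta (Z k + lag k),
  and for k > 2 m the lag equals 2 i eta (m - 1) Z k up to O(eta^2).  Both the lag and the
  discretisation push Z outwards.  Hence, with r = |Z 0| > 0 and a horizon N for which
  N eta^2 is small, |Z| stays between r / sqrt 2 and 2 r while |Z|^2 still grows by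
  N eta^2 r^2 / 2.  Summing the recursion turns this displacement into
  |sum Z k| >= N eta r / 24, and since sum (Z k)^2 = O(r^2 / eta) the average of |Re Z| and
  of |Im Z| is at least r / 16.  Against the best comparator in the l1-balls the regret is
  R_1 |sum Im Z| + R_2 |sum Re Z|, hence at least N eta r^2 / 384, which is
  c r^2 sqrt N / 384 for eta = c / sqrt N.
*)

lemma sum_le_prefix_bound:
  fixes g :: "nat \<Rightarrow> real"
  assumes "\<And>j. j < n \<Longrightarrow> g j \<le> (if j < L then A else 0) + B" and "0 \<le> A"
  shows "sum g {..<n} \<le> real L * A + real n * B"
proof -
  have prefix: "(\<Sum>j<n. if j < L then A else 0) = real (min n L) * A"
    by (induction n) (auto simp: min_def algebra_simps)
  have "sum g {..<n} \<le> (\<Sum>j<n. (if j < L then A else 0) + B)"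
    using assms(1) by (intro sum_mono) auto
  also have "\<dots> = real (min n L) * A + real n * B"
    by (simp add: sum.distrib prefix)
  also have "\<dots> \<le> real L * A + real n * B"
    using assms(2) by (simp add: mult_right_mono)
  finally show ?thesis .
qed

lemma norm_add_sq_ge: "norm (z + e) ^ 2 \<ge> norm z ^ 2 - 2 * norm z * norm (e :: 'a::real_inner)"
proof -
  have "2 * (z \<bullet> e) = norm (z + e) ^ 2 - norm z ^ 2 - norm e ^ 2"
    by (simp add: dot_norm)
  moreover have "- (norm z * norm e) \<le> z \<bullet> e"
    using Cauchy_Schwarz_ineq2[of z e] by linarith
  ultimately show ?thesis using zero_le_power2[of "norm e"] by (simp only: mult.assoc)
qed

lemma sum_power2_le_mult_sum_abs:
  fixes x :: "'a \<Rightarrow> real"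
  assumes "\<And>j. j \<in> A \<Longrightarrow> \<bar>x j\<bar> \<le> B"
  shows "(\<Sum>j\<in>A. x j ^ 2) \<le> B * (\<Sum>j\<in>A. \<bar>x j\<bar>)"
  unfolding sum_distrib_left
proof (rule sum_mono)
  fix j assume "j \<in> A"
  then show "x j ^ 2 \<le> B * \<bar>x j\<bar>"
    using assms mult_right_mono[of "\<bar>x j\<bar>" B "\<bar>x j\<bar>"] by (simp add: power2_eq_square)
qed

lemma abs_Im_cnj_mult_le: "\<bar>Im (cnj z * e)\<bar> \<le> cmod z * cmod e"
  by (metis abs_Im_le_cmod complex_mod_cnj norm_mult)

definition delayed :: "(nat \<Rightarrow> 'a::zero) \<Rightarrow> nat \<Rightarrow> nat \<Rightarrow> 'a" where
  "delayed f d k = (if d \<le> k then f (k - d) else 0)"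

lemma sum_delayed: "(\<Sum>k<n + d. delayed f d k) = (\<Sum>j<n. f j)"
  by (induction n) (simp_all add: delayed_def)

lemma norm_delayed_le:
  assumes "\<And>j. j \<le> k \<Longrightarrow> norm (f j) \<le> M" and "0 \<le> M"
  shows "norm (delayed f d k) \<le> M"
  using assms by (simp add: delayed_def)

lemma inner_cvec: "x \<bullet> cvec = x $ 1 - x $ 2"
  by (simp add: cvec_def inner_vec_def sum_2)

lemma Amat_mult_vec: "Amat *v x = (x \<bullet> cvec) *\<^sub>R cvec"
  by (simp add: vec_eq_iff forall_2 Amat_def matrix_vector_mult_def sum_2 inner_cvec)
     (simp add: cvec_def algebra_simps)

lemma transpose_Amat [simp]: "transpose Amat = Amat"
  by (simp add: Amat_def transpose_def vec_eq_iff mult.commute)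

lemma util1_eq: "util1 x y = (y \<bullet> cvec) *\<^sub>R cvec"
  by (simp add: util1_def Amat_mult_vec)

lemma util2_eq: "util2 x y = - ((x \<bullet> cvec) *\<^sub>R cvec)"
  by (simp add: util2_def Amat_mult_vec)

lemma cvec_nth [simp]: "cvec $ 1 = 1" "cvec $ 2 = -1"
  by (simp_all add: cvec_def)

lemma inner_cvec_cvec [simp]: "cvec \<bullet> cvec = 2"
  by (simp add: inner_cvec)

lemma inner_util_cvec [simp]:
  "util1 x y \<bullet> cvec = 2 * (y \<bullet> cvec)" "util2 x y \<bullet> cvec = - 2 * (x \<bullet> cvec)"
  by (simp_all add: util1_eq util2_eq)

lemma abs_inner_cvec_le_l1norm: "\<bar>x \<bullet> cvec\<bar> \<le> l1norm x"
  by (simp add: l1norm_def sum_2 inner_cvec)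

lemma regret_sum_eq:
  fixes x1 x2 :: "nat \<Rightarrow> real^2"
  shows "(\<Sum>t\<in>A. (y1 - x1 t) \<bullet> util1 (x1 t) (x2 t)) + (\<Sum>t\<in>A. (y2 - x2 t) \<bullet> util2 (x1 t) (x2 t))
    = (y1 \<bullet> cvec) * (\<Sum>t\<in>A. x2 t \<bullet> cvec) - (y2 \<bullet> cvec) * (\<Sum>t\<in>A. x1 t \<bullet> cvec)"
  by (simp add: util1_eq util2_eq algebra_simps sum_subtractf sum.distrib
      sum_distrib_left)

lemma RegTot_ge:
  fixes m n T :: nat and eta :: real and a b :: "real^2"
  defines "X1 \<equiv> \<lambda>t. fst (oftrl_traj m n eta a b t)"
    and "X2 \<equiv> \<lambda>t. snd (oftrl_traj m n eta a b t)"
  defines "R1 \<equiv> (\<Sum>t=1..T. l1norm (X1 t)) / real T"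
    and "R2 \<equiv> (\<Sum>t=1..T. l1norm (X2 t)) / real T"
  shows "RegTot m n eta a b T \<ge> R1 * \<bar>\<Sum>t=1..T. X2 t \<bullet> cvec\<bar> + R2 * \<bar>\<Sum>t=1..T. X1 t \<bullet> cvec\<bar>"
proof -
  define P where "P = (\<Sum>t=1..T. X1 t \<bullet> cvec)"
  define Q where "Q = (\<Sum>t=1..T. X2 t \<bullet> cvec)"
  define S where "S = {(y1 \<bullet> cvec) * Q - (y2 \<bullet> cvec) * P | y1 y2. l1norm y1 \<le> R1 \<and> l1norm y2 \<le> R2}"
  have RegTot_eq: "RegTot m n eta a b T = Sup S"
    unfolding RegTot_def S_def P_def Q_def X1_def X2_def R1_def R2_def Let_def regret_sum_eq ..
  have "bdd_above S"
  proof (rule bdd_aboveI)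
    fix x assume "x \<in> S"
    then obtain y1 y2 :: "real^2" where y: "l1norm y1 \<le> R1" "l1norm y2 \<le> R2"
      and x: "x = (y1 \<bullet> cvec) * Q - (y2 \<bullet> cvec) * P" unfolding S_def by blast
    have "(y1 \<bullet> cvec) * Q \<le> R1 * \<bar>Q\<bar>"
      using abs_inner_cvec_le_l1norm[of y1] y(1)
      by (metis abs_ge_self abs_mult abs_ge_zero mult_right_mono order_trans)
    moreover have "- ((y2 \<bullet> cvec) * P) \<le> R2 * \<bar>P\<bar>"
      using abs_inner_cvec_le_l1norm[of y2] y(2)
      by (metis abs_ge_minus_self abs_mult abs_ge_zero mult_right_mono order_trans)
    ultimately show "x \<le> R1 * \<bar>Q\<bar> + R2 * \<bar>P\<bar>" using x by linarith
  qed
  have "0 \<le> R1" "0 \<le> R2"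
    unfolding R1_def R2_def by (auto intro!: divide_nonneg_nonneg sum_nonneg simp: l1norm_def)
  define y1 :: "real^2" where "y1 = (R1 * sgn Q) *\<^sub>R axis 1 1"
  define y2 :: "real^2" where "y2 = (- R2 * sgn P) *\<^sub>R axis 1 1"
  have "l1norm y1 \<le> R1" "l1norm y2 \<le> R2"
    "R1 * \<bar>Q\<bar> + R2 * \<bar>P\<bar> = (y1 \<bullet> cvec) * Q - (y2 \<bullet> cvec) * P"
    using \<open>0 \<le> R1\<close> \<open>0 \<le> R2\<close>
    by (auto simp: y1_def y2_def l1norm_def sum_2 axis_def inner_cvec abs_mult abs_sgn_eq
        mult.assoc sgn_if)
  then have "R1 * \<bar>Q\<bar> + R2 * \<bar>P\<bar> \<in> S"
    unfolding S_def by blast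
  then show ?thesis
    unfolding RegTot_eq P_def Q_def using \<open>bdd_above S\<close> by (rule cSup_upper)
qed

lemma oftrl_traj_1 [simp]: "oftrl_traj m n eta a b (Suc 0) = (a, b)"
  by (subst oftrl_traj.simps) simp

lemma oftrl_traj_Suc_Suc:
  "oftrl_traj m n eta a b (Suc (Suc k)) =
    (let X = oftrl_traj m n eta a b;
         g1 = delayed (\<lambda>j. util1 (fst (X (Suc j))) (snd (X (Suc j)))) m k;
         g2 = delayed (\<lambda>j. util2 (fst (X (Suc j))) (snd (X (Suc j)))) m k;
         h1 = delayed (\<lambda>j. util1 (fst (X (Suc j))) (snd (X (Suc j)))) (Suc m) k;
         h2 = delayed (\<lambda>j. util2 (fst (X (Suc j))) (snd (X (Suc j)))) (Suc m) k
     in (fst (X (Suc k)) + eta *\<^sub>R g1 + (real n * eta) *\<^sub>R (g1 - h1),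
         snd (X (Suc k)) + eta *\<^sub>R g2 + (real n * eta) *\<^sub>R (g2 - h2)))"
proof -
  have "Suc k - m = Suc (k - m)" if "m \<le> k" using that by simp
  moreover have "Suc k - m - 1 = Suc (k - Suc m)" if "m < k" using that by simp
  ultimately show ?thesis
    by (subst oftrl_traj.simps) (auto simp: Let_def delayed_def)
qed

lemma oftrl_traj_cvec_step:
  fixes m n :: nat and eta :: real and a b :: "real^2"
  defines "P \<equiv> \<lambda>k. fst (oftrl_traj m n eta a b (Suc k)) \<bullet> cvec"
    and "Q \<equiv> \<lambda>k. snd (oftrl_traj m n eta a b (Suc k)) \<bullet> cvec"
  shows "P (Suc k) = P k + 2 * eta * ((1 + real n) * delayed Q m k - real n * delayed Q (Suc m) k)"
    and "Q (Suc k) = Q k - 2 * eta * ((1 + real n) * delayed P m k - real n * delayed P (Suc m) k)"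
  unfolding P_def Q_def oftrl_traj_Suc_Suc
  by (simp_all add: Let_def delayed_def algebra_simps)

locale delayed_oftrl =
  fixes Z :: "nat \<Rightarrow> complex" and m :: nat and eta :: real
  assumes eta_pos: "0 < eta" and delay_pos: "1 \<le> m"
    and Z_Suc: "\<And>k. Z (Suc k) = Z k - 2 * \<i> * eta * (2 * delayed Z m k - delayed Z (Suc m) k)"
begin

definition lag :: "nat \<Rightarrow> complex" where
  "lag k = 2 * delayed Z m k - delayed Z (Suc m) k - Z k"

abbreviation incr :: "nat \<Rightarrow> complex" where
  "incr k \<equiv> Z (Suc k) - Z k"

lemma incr_eq: "incr k = - 2 * \<i> * eta * (Z k + lag k)"
  by (simp add: Z_Suc lag_def)

lemma Z_Suc_lag: "Z (Suc k) = Z k - 2 * \<i> * eta * (Z k + lag k)"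
  by (simp add: Z_Suc lag_def)

lemma norm_incr: "cmod (incr k) = 2 * eta * cmod (Z k + lag k)"
  using eta_pos by (simp add: incr_eq norm_mult)

lemma Z_diff_eq_sum: "i \<le> j \<Longrightarrow> Z j - Z i = (\<Sum>l = i..<j. incr l)"
  by (simp add: sum_Suc_diff')

lemma norm_sq_incr_eq:
  "cmod (Z (Suc k)) ^ 2 - cmod (Z k) ^ 2 = 4 * eta * Im (cnj (Z k) * lag k) + cmod (incr k) ^ 2"
  unfolding norm_incr incr_eq Z_Suc_lag
  by (simp only: cmod_power2) (simp add: power2_eq_square algebra_simps)

lemma sq_incr_eq: "Z (Suc k) ^ 2 - Z k ^ 2 + 4 * \<i> * eta * Z k ^ 2 = - 4 * \<i> * eta * Z k * lag k + incr k ^ 2"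
  unfolding incr_eq Z_Suc_lag by (simp add: power2_eq_square algebra_simps)

lemma Z_diff_eq_partial_sums:
  assumes "N = n + m + 1"
  shows "Z N - Z 0 = - 2 * \<i> * eta * ((\<Sum>j<n. Z j) + 2 * Z n)"
proof -
  have "Z N - Z 0 = (\<Sum>k<N. incr k)"
    by (simp add: sum_lessThan_telescope)
  also have "\<dots> = - 2 * \<i> * eta * (\<Sum>k<N. 2 * delayed Z m k - delayed Z (Suc m) k)"
    by (simp add: Z_Suc sum_distrib_left)
  also have "(\<Sum>k<N. 2 * delayed Z m k - delayed Z (Suc m) k)
      = 2 * (\<Sum>k<Suc n + m. delayed Z m k) - (\<Sum>k<n + Suc m. delayed Z (Suc m) k)"
    using assms by (simp add: sum_subtractf sum_distrib_left)
  also have "\<dots> = (\<Sum>j<n. Z j) + 2 * Z n"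
    unfolding sum_delayed by simp
  finally show ?thesis .
qed

lemma lag_eq_incr_sum: "m < j \<Longrightarrow> lag j = incr (j - Suc m) - (\<Sum>l = j - m..<j. incr l)"
  by (simp add: lag_def delayed_def sum_Suc_diff' Suc_diff_Suc)

definition incr_bound :: "real \<Rightarrow> nat \<Rightarrow> real" where
  "incr_bound M j = (if j < m + 1 then 16 * eta * M^2 else 0) + (24 * real m + 60) * eta^2 * M^2"

context
  fixes K :: nat and M :: real
  assumes bounded: "\<And>j. j \<le> K \<Longrightarrow> cmod (Z j) \<le> M"
begin

lemma bound_nonneg: "0 \<le> M"
  using bounded[of 0] norm_ge_zero order_trans by blast

lemma norm_delayed_term_le:
  assumes "j \<le> K"
  shows "cmod (2 * delayed Z m j - delayed Z (Suc m) j) \<le> 3 * M"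
proof -
  have delayed_le: "cmod (delayed Z d j) \<le> M" for d
    using assms bounded bound_nonneg by (intro norm_delayed_le) auto
  have "cmod (2 * delayed Z m j - delayed Z (Suc m) j)
      \<le> 2 * cmod (delayed Z m j) + cmod (delayed Z (Suc m) j)"
    using norm_triangle_ineq4[of "2 * delayed Z m j"] by (simp add: norm_mult)
  then show ?thesis
    using delayed_le[of m] delayed_le[of "Suc m"] by linarith
qed

lemma norm_incr_le: "j \<le> K \<Longrightarrow> cmod (incr j) \<le> 6 * eta * M"
  using norm_delayed_term_le[of j] eta_pos by (simp add: Z_Suc norm_mult)

lemma norm_lag_le: "j \<le> K \<Longrightarrow> cmod (lag j) \<le> 4 * M"
  using norm_delayed_term_le[of j] bounded[of j]
    norm_triangle_ineq4[of "2 * delayed Z m j - delayed Z (Suc m) j" "Z j"]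
  unfolding lag_def by linarith

lemma norm_Z_diff_le:
  assumes "i \<le> j" "j \<le> Suc K"
  shows "cmod (Z j - Z i) \<le> real (j - i) * (6 * eta * M)"
proof -
  have "cmod (Z j - Z i) \<le> (\<Sum>l = i..<j. cmod (incr l))"
    unfolding Z_diff_eq_sum[OF assms(1)] by (rule norm_sum)
  also have "\<dots> \<le> (\<Sum>l = i..<j. 6 * eta * M)"
    using assms by (intro sum_mono norm_incr_le) auto
  finally show ?thesis by simp
qed

lemma norm_lag_le_delayed:
  assumes "m < j" "j \<le> K"
  shows "cmod (lag j) \<le> 6 * (real m + 1) * eta * M"
proof -
  have "cmod (lag j) \<le> cmod (incr (j - Suc m)) + cmod (\<Sum>l = j - m..<j. incr l)"
    unfolding lag_eq_incr_sum[OF assms(1)] by (rule norm_triangle_ineq4)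
  also have "\<dots> \<le> 6 * eta * M + (\<Sum>l = j - m..<j. 6 * eta * M)"
    using assms by (intro add_mono norm_incr_le order_trans[OF norm_sum] sum_mono) auto
  finally show ?thesis
    using assms by (simp add: algebra_simps)
qed

lemma norm_incr_approx_le:
  assumes "j - Suc m \<le> l" "l < j" "2 * m + 2 \<le> j" "j \<le> K"
  shows "cmod (incr l + 2 * \<i> * eta * Z j) \<le> 24 * (real m + 1) * eta^2 * M"
proof -
  have l: "m < l" "l \<le> K" "real (j - l) \<le> real m + 1"
    using assms by auto
  have "cmod (lag l - (Z j - Z l)) \<le> cmod (lag l) + cmod (Z j - Z l)"
    by (rule norm_triangle_ineq4)
  also have "\<dots> \<le> 6 * (real m + 1) * eta * M + real (j - l) * (6 * eta * M)"
    using assms l by (intro add_mono norm_lag_le_delayed norm_Z_diff_le) auto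
  also have "\<dots> \<le> 6 * (real m + 1) * eta * M + (real m + 1) * (6 * eta * M)"
    using l eta_pos bound_nonneg by (intro add_left_mono mult_right_mono) auto
  finally have "cmod (lag l - (Z j - Z l)) \<le> 12 * (real m + 1) * eta * M"
    by (simp add: algebra_simps)
  moreover have "incr l + 2 * \<i> * eta * Z j = - 2 * \<i> * eta * (lag l - (Z j - Z l))"
    by (simp add: incr_eq algebra_simps)
  then have "cmod (incr l + 2 * \<i> * eta * Z j) = 2 * eta * cmod (lag l - (Z j - Z l))"
    using eta_pos by (simp only: norm_mult) simp
  ultimately have "cmod (incr l + 2 * \<i> * eta * Z j) \<le> 2 * eta * (12 * (real m + 1) * eta * M)"
    using eta_pos by (simp add: mult_left_mono)
  then show ?thesis
    by (simp add: power2_eq_square algebra_simps)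
qed

lemma lag_approx:
  assumes "2 * m + 2 \<le> j" "j \<le> K"
  shows "cmod (lag j - 2 * \<i> * eta * (real m - 1) * Z j) \<le> 24 * (real m + 1)^2 * eta^2 * M"
proof -
  let ?w = "2 * \<i> * eta * Z j"
  define S where "S = (\<Sum>l = j - m..<j. incr l)"
  have "(\<Sum>l = j - m..<j. incr l + ?w) = S + of_nat m * ?w"
    unfolding S_def using assms by (simp add: sum.distrib)
  moreover have "lag j = incr (j - Suc m) - S"
    unfolding S_def using assms by (intro lag_eq_incr_sum) auto
  ultimately have "lag j - 2 * \<i> * eta * (real m - 1) * Z j
      = (incr (j - Suc m) + ?w) - (\<Sum>l = j - m..<j. incr l + ?w)"
    by (simp add: algebra_simps)
  then have "cmod (lag j - 2 * \<i> * eta * (real m - 1) * Z j)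
      \<le> cmod (incr (j - Suc m) + ?w) + cmod (\<Sum>l = j - m..<j. incr l + ?w)"
    by (simp only: norm_triangle_ineq4)
  also have "\<dots> \<le> cmod (incr (j - Suc m) + ?w) + (\<Sum>l = j - m..<j. cmod (incr l + ?w))"
    by (rule add_left_mono[OF norm_sum])
  also have "\<dots> \<le> 24 * (real m + 1) * eta^2 * M + (\<Sum>l = j - m..<j. 24 * (real m + 1) * eta^2 * M)"
    using assms by (intro add_mono sum_mono norm_incr_approx_le) auto
  finally show ?thesis
    using assms by (simp add: power2_eq_square algebra_simps)
qed

lemma norm_Z_lag_le:
  assumes "j \<le> K"
  shows "4 * eta * (cmod (Z j) * cmod (lag j))
    \<le> (if j < m + 1 then 16 * eta * M^2 else 0) + 24 * (real m + 1) * eta^2 * M^2"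
proof (cases "j < m + 1")
  case True
  have "cmod (Z j) * cmod (lag j) \<le> M * (4 * M)"
    using assms bounded norm_lag_le bound_nonneg by (intro mult_mono) auto
  then have "4 * eta * (cmod (Z j) * cmod (lag j)) \<le> 4 * eta * (M * (4 * M))"
    using eta_pos by (intro mult_left_mono) auto
  moreover have "4 * eta * (M * (4 * M)) = 16 * eta * M^2"
    by (simp add: power2_eq_square)
  moreover have "0 \<le> 24 * (real m + 1) * eta^2 * M^2"
    by simp
  ultimately show ?thesis
    unfolding if_P[OF True] by linarith
next
  case False
  have "cmod (Z j) * cmod (lag j) \<le> M * (6 * (real m + 1) * eta * M)"
    using assms False bounded norm_lag_le_delayed bound_nonneg by (intro mult_mono) auto
  then have "4 * eta * (cmod (Z j) * cmod (lag j)) \<le> 4 * eta * (M * (6 * (real m + 1) * eta * M))"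
    using eta_pos by (intro mult_left_mono) auto
  then show ?thesis
    using False by (simp add: power2_eq_square algebra_simps)
qed

lemma norm_incr_sq_le: "j \<le> K \<Longrightarrow> cmod (incr j) ^ 2 \<le> 36 * eta^2 * M^2"
  using power_mono[OF norm_incr_le norm_ge_zero, of j 2] by (simp add: power_mult_distrib)

lemma norm_sq_incr_le:
  assumes "j \<le> K"
  shows "cmod (Z (Suc j)) ^ 2 - cmod (Z j) ^ 2 \<le> incr_bound M j"
proof -
  have "4 * eta * Im (cnj (Z j) * lag j) \<le> 4 * eta * (cmod (Z j) * cmod (lag j))"
    using abs_Im_cnj_mult_le[of "Z j" "lag j"] eta_pos by (intro mult_left_mono) auto
  then show ?thesis
    using norm_sq_incr_eq[of j] norm_Z_lag_le[OF assms] norm_incr_sq_le[OF assms]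
    by (simp add: incr_bound_def algebra_simps)
qed

lemma norm_sq_drift_le:
  assumes "j \<le> K"
  shows "cmod (Z (Suc j) ^ 2 - Z j ^ 2 + 4 * \<i> * eta * Z j ^ 2) \<le> incr_bound M j"
proof -
  have "cmod (Z (Suc j) ^ 2 - Z j ^ 2 + 4 * \<i> * eta * Z j ^ 2)
      \<le> cmod (- 4 * \<i> * eta * Z j * lag j) + cmod (incr j ^ 2)"
    unfolding sq_incr_eq by (rule norm_triangle_ineq)
  also have "\<dots> = 4 * eta * (cmod (Z j) * cmod (lag j)) + cmod (incr j) ^ 2"
    using eta_pos by (simp add: norm_mult norm_power)
  finally show ?thesis
    using norm_Z_lag_le[OF assms] norm_incr_sq_le[OF assms]
    by (simp add: incr_bound_def algebra_simps)
qed

lemma norm_sq_incr_ge: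
  assumes "j \<le> K"
  shows "cmod (Z (Suc j)) ^ 2 - cmod (Z j) ^ 2 \<ge> - 16 * eta * M^2"
proof -
  have "cmod (Z j) * cmod (lag j) \<le> M * (4 * M)"
    using assms bounded norm_lag_le bound_nonneg by (intro mult_mono) auto
  then have "4 * eta * (- Im (cnj (Z j) * lag j)) \<le> 4 * eta * (M * (4 * M))"
    using abs_Im_cnj_mult_le[of "Z j" "lag j"] eta_pos by (intro mult_left_mono) auto
  moreover have "4 * eta * (M * (4 * M)) = 16 * eta * M^2"
    by (simp add: power2_eq_square)
  ultimately show ?thesis
    using norm_sq_incr_eq[of j] zero_le_power2[of "cmod (incr j)"] by linarith
qed

lemma Im_cnj_Z_lag_ge:
  assumes "2 * m + 2 \<le> j" "j \<le> K"
  shows "Im (cnj (Z j) * lag j) \<ge> - 24 * (real m + 1)^2 * eta^2 * M^2"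
proof -
  define e0 where "e0 = 2 * \<i> * eta * (real m - 1) * Z j"
  have "Im (cnj (Z j) * e0) = 2 * eta * (real m - 1) * cmod (Z j) ^ 2"
    unfolding e0_def by (simp only: cmod_power2) (simp add: algebra_simps power2_eq_square)
  then have "0 \<le> Im (cnj (Z j) * e0)"
    using eta_pos delay_pos by simp
  moreover have "cmod (Z j) * cmod (lag j - e0) \<le> M * (24 * (real m + 1)^2 * eta^2 * M)"
    using assms bounded lag_approx bound_nonneg unfolding e0_def by (intro mult_mono) auto
  moreover have "Im (cnj (Z j) * lag j) = Im (cnj (Z j) * e0) + Im (cnj (Z j) * (lag j - e0))"
    by (simp add: algebra_simps)
  ultimately show ?thesis
    using abs_Im_cnj_mult_le[of "Z j" "lag j - e0"] by (simp add: power2_eq_square algebra_simps)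
qed

lemma norm_incr_sq_ge:
  assumes "m < j" "j \<le> K"
  shows "cmod (incr j) ^ 2 \<ge> 4 * eta^2 * cmod (Z j) ^ 2 - 48 * (real m + 1) * eta^3 * M^2"
proof -
  have "cmod (Z j) * cmod (lag j) \<le> M * (6 * (real m + 1) * eta * M)"
    using assms bounded norm_lag_le_delayed bound_nonneg by (intro mult_mono) auto
  then have "8 * eta^2 * (cmod (Z j) * cmod (lag j)) \<le> 8 * eta^2 * (M * (6 * (real m + 1) * eta * M))"
    by (intro mult_left_mono) auto
  moreover have "cmod (incr j) ^ 2 \<ge> 4 * eta^2 * (cmod (Z j) ^ 2 - 2 * cmod (Z j) * cmod (lag j))"
    unfolding norm_incr power_mult_distrib using norm_add_sq_ge[of "Z j" "lag j"]
    by (simp add: mult_left_mono)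
  ultimately show ?thesis
    by (simp add: power2_eq_square power3_eq_cube algebra_simps)
qed

lemma norm_sq_incr_ge_late:
  assumes "2 * m + 2 \<le> j" "j \<le> K"
  shows "cmod (Z (Suc j)) ^ 2 - cmod (Z j) ^ 2 \<ge> 4 * eta^2 * cmod (Z j) ^ 2 - 144 * (real m + 1)^2 * eta^3 * M^2"
proof -
  have "4 * eta * Im (cnj (Z j) * lag j) \<ge> 4 * eta * (- 24 * (real m + 1)^2 * eta^2 * M^2)"
    using Im_cnj_Z_lag_ge[OF assms] eta_pos by (intro mult_left_mono) auto
  moreover have "48 * (real m + 1) * eta^3 * M^2 \<le> 48 * (real m + 1)^2 * eta^3 * M^2"
    using eta_pos by (intro mult_right_mono) (auto simp: power2_eq_square algebra_simps)
  ultimately show ?thesis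
    using norm_sq_incr_eq[of j] norm_incr_sq_ge[of j] assms
    by (simp add: power2_eq_square power3_eq_cube algebra_simps)
qed

end

end

(* For eta = c / sqrt N the last three assumptions say that c is small and N is large,
   because N eta^2 = c^2 and N eta = c sqrt N. *)
locale delayed_oftrl_horizon = delayed_oftrl +
  fixes N :: nat and r :: real
  assumes init_norm: "cmod (Z 0) = r" and r_pos: "0 < r"
    and step_small: "1152 * (real m + 3)^2 * eta \<le> 1"
    and horizon_short: "48 * (real m + 3) * real N * eta^2 \<le> 1"
    and horizon_long: "132 * (real m + 3) \<le> real N * eta"
begin

lemma delay_sq_eta_le: "(real m + 1)^2 * eta \<le> 1 / 1152"
proof -
  have "(real m + 1)^2 * eta \<le> (real m + 3)^2 * eta"
    using eta_pos by (intro mult_right_mono power_mono) auto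
  then show ?thesis
    using step_small by linarith
qed

lemma delay_eta_le: "(real m + 1) * eta \<le> 1 / 1152"
proof -
  have "(real m + 1) * eta \<le> (real m + 1)^2 * eta"
    using eta_pos by (intro mult_right_mono) (auto simp: power2_eq_square)
  then show ?thesis
    using delay_sq_eta_le by linarith
qed

lemma eta_le_1: "eta \<le> 1"
proof -
  have "eta \<le> (real m + 1) * eta"
    using eta_pos by simp
  then show ?thesis
    using delay_eta_le by linarith
qed

lemma horizon_eta_sq_le: "real N * eta^2 \<le> 1 / 144"
proof -
  have "144 * (real N * eta^2) \<le> (48 * (real m + 3)) * (real N * eta^2)"
    by (intro mult_right_mono) auto
  then show ?thesis
    using horizon_short by (simp only: mult.assoc)
qed

lemma sum_incr_bound_le:
  assumes "n \<le> N"
  shows "(\<Sum>j<n. incr_bound (2 * r) j) \<le> 3 * r^2"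
proof -
  have "(\<Sum>j<n. incr_bound (2 * r) j)
      \<le> real (m + 1) * (16 * eta * (2 * r)^2) + real n * ((24 * real m + 60) * eta^2 * (2 * r)^2)"
    using eta_pos by (intro sum_le_prefix_bound) (auto simp: incr_bound_def)
  also have "\<dots> = (64 * ((real m + 1) * eta)) * r^2 + (4 * (real n * (24 * real m + 60) * eta^2)) * r^2"
    by (simp add: power2_eq_square algebra_simps)
  also have "\<dots> \<le> 1 * r^2 + 2 * r^2"
  proof (intro add_mono mult_right_mono)
    show "64 * ((real m + 1) * eta) \<le> 1"
      using delay_eta_le by simp
    have "real n * (24 * real m + 60) * eta^2 \<le> real N * (24 * real m + 72) * eta^2"
      using assms by (intro mult_right_mono mult_mono) auto
    then show "4 * (real n * (24 * real m + 60) * eta^2) \<le> 2"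
      using horizon_short by (simp add: algebra_simps)
  qed auto
  finally show ?thesis
    by simp
qed

lemma norm_Z_le: "j \<le> N \<Longrightarrow> cmod (Z j) \<le> 2 * r"
proof (induction j rule: less_induct)
  case (less k)
  show ?case
  proof (cases k)
    case 0
    then show ?thesis using init_norm r_pos by simp
  next
    case (Suc k')
    have bounded: "\<And>j. j \<le> k' \<Longrightarrow> cmod (Z j) \<le> 2 * r"
      using less Suc by simp
    have "cmod (Z k) ^ 2 - r^2 = (\<Sum>j<k. cmod (Z (Suc j)) ^ 2 - cmod (Z j) ^ 2)"
      using sum_lessThan_telescope[of "\<lambda>j. cmod (Z j) ^ 2" k] init_norm by simp
    also have "\<dots> \<le> (\<Sum>j<k. incr_bound (2 * r) j)"
    proof (rule sum_mono)
      fix j assume "j \<in> {..<k}"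
      then have "j \<le> k'" using Suc by simp
      then show "cmod (Z (Suc j)) ^ 2 - cmod (Z j) ^ 2 \<le> incr_bound (2 * r) j"
        using norm_sq_incr_le[where K = k' and M = "2 * r", OF bounded] by simp
    qed
    also have "\<dots> \<le> 3 * r^2"
      using less.prems by (rule sum_incr_bound_le)
    finally have "cmod (Z k) ^ 2 \<le> (2 * r) ^ 2"
      by (simp add: power2_eq_square)
    moreover have "0 \<le> 2 * r"
      using r_pos by simp
    ultimately show ?thesis
      by (rule power2_le_imp_le)
  qed
qed

lemma norm_sq_loss_eq: "r^2 - cmod (Z k) ^ 2 = (\<Sum>j<k. cmod (Z j) ^ 2 - cmod (Z (Suc j)) ^ 2)"
  using sum_lessThan_telescope'[of "\<lambda>j. cmod (Z j) ^ 2" k] init_norm by simp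

lemma norm_sq_loss_le_late:
  assumes "2 * m + 2 \<le> j" "j \<le> N"
  shows "cmod (Z j) ^ 2 - cmod (Z (Suc j)) ^ 2
    \<le> 576 * (real m + 1)^2 * eta^3 * r^2 - 4 * eta^2 * cmod (Z j) ^ 2"
  using norm_sq_incr_ge_late[where K = N and M = "2 * r", OF norm_Z_le assms]
  by (simp add: power2_eq_square)

lemma norm_sq_loss_le:
  assumes "j \<le> N"
  shows "cmod (Z j) ^ 2 - cmod (Z (Suc j)) ^ 2
    \<le> (if j < 2 * m + 2 then 64 * eta * r^2 else 0) + 576 * (real m + 1)^2 * eta^3 * r^2"
proof (cases "j < 2 * m + 2")
  case True
  have "- 16 * eta * (2 * r)^2 \<le> cmod (Z (Suc j)) ^ 2 - cmod (Z j) ^ 2"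
    by (rule norm_sq_incr_ge[where K = N and M = "2 * r", OF norm_Z_le assms])
  moreover have "- 16 * eta * (2 * r)^2 = - (64 * eta * r^2)"
    by (simp add: power2_eq_square)
  moreover have "0 \<le> 576 * (real m + 1)^2 * eta^3 * r^2"
    using eta_pos by simp
  ultimately show ?thesis
    unfolding if_P[OF True] by linarith
next
  case False
  then have "cmod (Z j) ^ 2 - cmod (Z (Suc j)) ^ 2
      \<le> 576 * (real m + 1)^2 * eta^3 * r^2 - 4 * eta^2 * cmod (Z j) ^ 2"
    using norm_sq_loss_le_late[OF _ assms] by simp
  moreover have "0 \<le> 4 * eta^2 * cmod (Z j) ^ 2"
    by simp
  ultimately show ?thesis
    unfolding if_not_P[OF False] by linarith
qed

lemma norm_sq_ge_half:
  assumes "k \<le> N"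
  shows "r^2 / 2 \<le> cmod (Z k) ^ 2"
proof -
  have "r^2 - cmod (Z k) ^ 2
      \<le> real (2 * m + 2) * (64 * eta * r^2) + real k * (576 * (real m + 1)^2 * eta^3 * r^2)"
    unfolding norm_sq_loss_eq using assms eta_pos by (intro sum_le_prefix_bound norm_sq_loss_le) auto
  also have "\<dots> = (128 * ((real m + 1) * eta)) * r^2
      + (576 * ((real m + 1)^2 * eta) * (real k * eta^2)) * r^2"
    by (simp add: power2_eq_square power3_eq_cube algebra_simps)
  also have "\<dots> \<le> (1/4) * r^2 + (1/4) * r^2"
  proof (intro add_mono mult_right_mono)
    show "128 * ((real m + 1) * eta) \<le> 1/4"
      using delay_eta_le by simp
    have "real k * eta^2 \<le> real N * eta^2"
      using assms by (intro mult_right_mono) auto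
    then have "((real m + 1)^2 * eta) * (real k * eta^2) \<le> (1 / 1152) * (1 / 144)"
      using delay_sq_eta_le horizon_eta_sq_le by (intro mult_mono) auto
    then show "576 * ((real m + 1)^2 * eta) * (real k * eta^2) \<le> 1/4"
      by (simp only: mult.assoc)
  qed auto
  finally show ?thesis
    by simp
qed

lemma norm_sq_loss_le_growing:
  assumes "j \<le> N"
  shows "cmod (Z j) ^ 2 - cmod (Z (Suc j)) ^ 2
    \<le> (if j < 2 * m + 2 then 64 * eta * r^2 + 2 * eta^2 * r^2 else 0)
      + (576 * (real m + 1)^2 * eta^3 * r^2 - 2 * eta^2 * r^2)"
proof (cases "j < 2 * m + 2")
  case True
  then show ?thesis
    using norm_sq_loss_le[OF assms] by simp
next
  case False
  then have "cmod (Z j) ^ 2 - cmod (Z (Suc j)) ^ 2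
      \<le> 576 * (real m + 1)^2 * eta^3 * r^2 - 4 * eta^2 * cmod (Z j) ^ 2"
    using norm_sq_loss_le_late[OF _ assms] by simp
  moreover have "4 * eta^2 * (r^2 / 2) \<le> 4 * eta^2 * cmod (Z j) ^ 2"
    using norm_sq_ge_half[OF assms] by (intro mult_left_mono) auto
  ultimately show ?thesis
    unfolding if_not_P[OF False] by linarith
qed

lemma norm_sq_growth: "real N * eta^2 * r^2 / 2 \<le> cmod (Z N) ^ 2 - r^2"
proof -
  have "r^2 - cmod (Z N) ^ 2
      \<le> real (2 * m + 2) * (64 * eta * r^2 + 2 * eta^2 * r^2)
        + real N * (576 * (real m + 1)^2 * eta^3 * r^2 - 2 * eta^2 * r^2)"
    unfolding norm_sq_loss_eq using eta_pos
    by (intro sum_le_prefix_bound norm_sq_loss_le_growing) auto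
  also have "\<dots> = ((2 * real m + 2) * (64 + 2 * eta) * eta
      + 576 * ((real m + 1)^2 * eta) * (real N * eta^2) - 2 * (real N * eta^2)) * r^2"
    by (simp add: power2_eq_square power3_eq_cube algebra_simps)
  also have "\<dots> \<le> (- (real N * eta^2 / 2)) * r^2"
  proof (intro mult_right_mono)
    have "(2 * real m + 2) * (64 + 2 * eta) \<le> (2 * real m + 2) * 66"
      using eta_le_1 by (intro mult_left_mono) auto
    then have "(2 * real m + 2) * (64 + 2 * eta) * eta \<le> (real N * eta) * eta"
      using horizon_long eta_pos by (intro mult_right_mono) auto
    moreover have "576 * ((real m + 1)^2 * eta) * (real N * eta^2) \<le> (1/2) * (real N * eta^2)"
      using delay_sq_eta_le by (intro mult_right_mono) auto
    ultimately show "(2 * real m + 2) * (64 + 2 * eta) * eta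
        + 576 * ((real m + 1)^2 * eta) * (real N * eta^2) - 2 * (real N * eta^2)
        \<le> - (real N * eta^2 / 2)"
      by (simp add: power2_eq_square)
  qed simp
  finally show ?thesis
    by simp
qed

lemma norm_displacement_ge: "real N * eta^2 * r / 6 \<le> cmod (Z N - Z 0)"
proof -
  define x where "x = cmod (Z N)"
  have "x \<le> 2 * r"
    unfolding x_def by (rule norm_Z_le) simp
  have growth: "real N * eta^2 * r^2 / 2 \<le> (x - r) * (x + r)"
    using norm_sq_growth unfolding x_def by (simp add: power2_eq_square algebra_simps)
  have "r \<le> x"
  proof (rule ccontr)
    assume "\<not> r \<le> x"
    then have "(x - r) * (x + r) < 0"
      using r_pos by (intro mult_neg_pos) (auto simp: x_def add_nonneg_pos)
    moreover have "0 \<le> real N * eta^2 * r^2 / 2"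
      by simp
    ultimately show False
      using growth by linarith
  qed
  then have "(x - r) * (x + r) \<le> (x - r) * (3 * r)"
    using \<open>x \<le> 2 * r\<close> by (intro mult_left_mono) auto
  then have "(real N * eta^2 * r / 6) * r \<le> (x - r) * r"
    using growth by (simp add: power2_eq_square algebra_simps)
  then have "real N * eta^2 * r / 6 \<le> x - r"
    using r_pos by simp
  also have "x - r \<le> cmod (Z N - Z 0)"
    using norm_triangle_ineq2[of "Z N" "Z 0"] init_norm unfolding x_def by simp
  finally show ?thesis .
qed

lemma delay_lt_horizon: "m + 1 \<le> N"
proof -
  have "real N * eta \<le> real N"
    using eta_le_1 by (simp add: mult_left_le)
  then have "real (m + 1) \<le> real N"
    using horizon_long by simp
  then show ?thesis
    by (simp only: of_nat_le_iff)
qed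

lemma norm_sum_ge: "real N * eta * r / 24 \<le> cmod (\<Sum>k<N. Z k)"
proof -
  define n where "n = N - (m + 1)"
  have N_eq: "N = n + m + 1"
    using delay_lt_horizon unfolding n_def by simp
  have "real N * eta^2 * r / 6 \<le> 2 * eta * cmod ((\<Sum>j<n. Z j) + 2 * Z n)"
    using norm_displacement_ge eta_pos unfolding Z_diff_eq_partial_sums[OF N_eq] by (simp add: norm_mult)
  then have partial: "real N * eta * r / 12 \<le> cmod ((\<Sum>j<n. Z j) + 2 * Z n)"
    using eta_pos by (simp add: power2_eq_square field_simps)
  have "(\<Sum>k<N. Z k) = (\<Sum>j<n. Z j) + (\<Sum>k = n..<N. Z k)"
    using N_eq by (simp add: lessThan_atLeast0 sum.atLeastLessThan_concat)
  then have "(\<Sum>j<n. Z j) + 2 * Z n = (\<Sum>k<N. Z k) + 2 * Z n - (\<Sum>k = n..<N. Z k)"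
    by simp
  then have "cmod ((\<Sum>j<n. Z j) + 2 * Z n) \<le> cmod ((\<Sum>k<N. Z k) + 2 * Z n) + cmod (\<Sum>k = n..<N. Z k)"
    by (simp only: norm_triangle_ineq4)
  also have "\<dots> \<le> cmod (\<Sum>k<N. Z k) + cmod (2 * Z n) + cmod (\<Sum>k = n..<N. Z k)"
    by (rule add_right_mono[OF norm_triangle_ineq])
  moreover have "cmod (2 * Z n) \<le> 4 * r"
    using norm_Z_le[of n] N_eq by (simp add: norm_mult)
  moreover have "cmod (\<Sum>k = n..<N. Z k) \<le> (\<Sum>k = n..<N. 2 * r)"
    using norm_Z_le by (intro order_trans[OF norm_sum] sum_mono) auto
  moreover have "(\<Sum>k = n..<N. 2 * r) = (real m + 1) * (2 * r)"
    using N_eq by simp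
  moreover have "48 * (real m + 3) * r \<le> real N * eta * r"
    using horizon_long r_pos by (intro mult_right_mono) auto
  ultimately show ?thesis
    using partial by (simp add: algebra_simps)
qed

lemma norm_sum_sq_le: "cmod (\<Sum>j<N. Z j ^ 2) \<le> 2 * r^2 / eta"
proof -
  let ?drift = "\<lambda>j. Z (Suc j) ^ 2 - Z j ^ 2 + 4 * \<i> * eta * Z j ^ 2"
  have "4 * \<i> * eta * (\<Sum>j<N. Z j ^ 2) = (\<Sum>j<N. ?drift j) - (Z N ^ 2 - Z 0 ^ 2)"
    using sum_lessThan_telescope[of "\<lambda>j. Z j ^ 2" N]
    by (simp add: sum.distrib sum_distrib_left)
  moreover have "cmod (4 * \<i> * eta * (\<Sum>j<N. Z j ^ 2)) = 4 * eta * cmod (\<Sum>j<N. Z j ^ 2)"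
    using eta_pos by (simp add: norm_mult)
  ultimately have "4 * eta * cmod (\<Sum>j<N. Z j ^ 2) = cmod ((\<Sum>j<N. ?drift j) - (Z N ^ 2 - Z 0 ^ 2))"
    by simp
  also have "\<dots> \<le> cmod (\<Sum>j<N. ?drift j) + cmod (Z N ^ 2 - Z 0 ^ 2)"
    by (rule norm_triangle_ineq4)
  moreover have "cmod (\<Sum>j<N. ?drift j) \<le> 3 * r^2"
  proof -
    have "cmod (\<Sum>j<N. ?drift j) \<le> (\<Sum>j<N. incr_bound (2 * r) j)"
      using norm_sq_drift_le[where K = N and M = "2 * r", OF norm_Z_le]
      by (intro order_trans[OF norm_sum] sum_mono) simp
    also have "\<dots> \<le> 3 * r^2"
      by (rule sum_incr_bound_le) simp
    finally show ?thesis .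
  qed
  moreover have "cmod (Z N ^ 2 - Z 0 ^ 2) \<le> 5 * r^2"
  proof -
    have "cmod (Z N ^ 2 - Z 0 ^ 2) \<le> cmod (Z N) ^ 2 + cmod (Z 0) ^ 2"
      using norm_triangle_ineq4[of "Z N ^ 2" "Z 0 ^ 2"] by (simp add: norm_power)
    moreover have "cmod (Z N) ^ 2 \<le> (2 * r) ^ 2"
      using norm_Z_le[of N] by (intro power_mono) auto
    ultimately show ?thesis
      using init_norm by (simp add: power2_eq_square)
  qed
  ultimately have "cmod (\<Sum>j<N. Z j ^ 2) * eta \<le> 2 * r^2"
    by (simp add: algebra_simps)
  then show ?thesis
    using eta_pos by (simp add: le_divide_eq)
qed

lemma sum_sq_Re_Im_ge:
  "real N * r^2 / 8 \<le> (\<Sum>j<N. Re (Z j) ^ 2)" "real N * r^2 / 8 \<le> (\<Sum>j<N. Im (Z j) ^ 2)"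
proof -
  have "real N * r^2 / 2 \<le> (\<Sum>j<N. cmod (Z j) ^ 2)"
    using sum_mono[of "{..<N}" "\<lambda>_. r^2 / 2" "\<lambda>j. cmod (Z j) ^ 2"] norm_sq_ge_half by simp
  moreover have "\<bar>\<Sum>j<N. Re (Z j ^ 2)\<bar> \<le> real N * r^2 / 4"
  proof -
    have "\<bar>\<Sum>j<N. Re (Z j ^ 2)\<bar> \<le> 2 * r^2 / eta"
      using abs_Re_le_cmod[of "\<Sum>j<N. Z j ^ 2"] norm_sum_sq_le by simp
    also have "\<dots> \<le> real N * r^2 / 4"
      using horizon_long eta_pos r_pos by (simp add: field_simps)
    finally show ?thesis .
  qed
  moreover have "2 * (\<Sum>j<N. Re (Z j) ^ 2) = (\<Sum>j<N. cmod (Z j) ^ 2) + (\<Sum>j<N. Re (Z j ^ 2))"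
    and "2 * (\<Sum>j<N. Im (Z j) ^ 2) = (\<Sum>j<N. cmod (Z j) ^ 2) - (\<Sum>j<N. Re (Z j ^ 2))"
    unfolding cmod_power2 Re_power2 by (simp_all add: sum.distrib sum_subtractf sum_distrib_left[symmetric])
  ultimately show "real N * r^2 / 8 \<le> (\<Sum>j<N. Re (Z j) ^ 2)" "real N * r^2 / 8 \<le> (\<Sum>j<N. Im (Z j) ^ 2)"
    unfolding abs_le_iff by linarith+
qed

lemma sum_abs_Re_Im_ge:
  "real N * r / 16 \<le> (\<Sum>j<N. \<bar>Re (Z j)\<bar>)" "real N * r / 16 \<le> (\<Sum>j<N. \<bar>Im (Z j)\<bar>)"
proof -
  have "real N * r / 16 \<le> (\<Sum>j<N. \<bar>f (Z j)\<bar>)"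
    if f_le: "\<And>z. \<bar>f z\<bar> \<le> cmod z" and sum_sq: "real N * r^2 / 8 \<le> (\<Sum>j<N. f (Z j) ^ 2)" for f
  proof -
    have "(\<Sum>j<N. f (Z j) ^ 2) \<le> 2 * r * (\<Sum>j<N. \<bar>f (Z j)\<bar>)"
    proof (rule sum_power2_le_mult_sum_abs)
      fix j assume "j \<in> {..<N}"
      then show "\<bar>f (Z j)\<bar> \<le> 2 * r"
        using order_trans[OF f_le norm_Z_le[of j]] by simp
    qed
    then have "(real N * r / 16) * (2 * r) \<le> (\<Sum>j<N. \<bar>f (Z j)\<bar>) * (2 * r)"
      using sum_sq by (simp add: power2_eq_square algebra_simps)
    then show ?thesis
      using r_pos by (simp add: ac_simps)
  qed
  then show "real N * r / 16 \<le> (\<Sum>j<N. \<bar>Re (Z j)\<bar>)" "real N * r / 16 \<le> (\<Sum>j<N. \<bar>Im (Z j)\<bar>)"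
    using sum_sq_Re_Im_ge abs_Re_le_cmod abs_Im_le_cmod by blast+
qed

end

lemma delayed_oftrl_traj:
  fixes m :: nat and eta :: real and a b :: "real^2"
  defines "Z \<equiv> \<lambda>k. Complex (fst (oftrl_traj m 1 eta a b (Suc k)) \<bullet> cvec) (snd (oftrl_traj m 1 eta a b (Suc k)) \<bullet> cvec)"
  assumes "0 < eta" "1 \<le> m"
  shows "delayed_oftrl Z m eta"
proof
  fix k
  have delayed_Z: "delayed Z d k = Complex (delayed (\<lambda>j. Re (Z j)) d k) (delayed (\<lambda>j. Im (Z j)) d k)" for d
    by (simp add: delayed_def complex_eq_iff)
  have "Re (Z (Suc k)) = Re (Z k) + 2 * eta * (2 * delayed (\<lambda>j. Im (Z j)) m k - delayed (\<lambda>j. Im (Z j)) (Suc m) k)"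
    "Im (Z (Suc k)) = Im (Z k) - 2 * eta * (2 * delayed (\<lambda>j. Re (Z j)) m k - delayed (\<lambda>j. Re (Z j)) (Suc m) k)"
    using oftrl_traj_cvec_step[of m 1 eta a b k] unfolding Z_def by simp_all
  then show "Z (Suc k) = Z k - 2 * \<i> * eta * (2 * delayed Z m k - delayed Z (Suc m) k)"
    unfolding complex_eq_iff delayed_Z by simp
qed (use assms in auto)

lemma delayed_oftrl_horizon_traj:
  fixes m T :: nat and eta :: real and a b :: "real^2"
  defines "Z \<equiv> \<lambda>k. Complex (fst (oftrl_traj m 1 eta a b (Suc k)) \<bullet> cvec) (snd (oftrl_traj m 1 eta a b (Suc k)) \<bullet> cvec)"
    and "r \<equiv> cmod (Complex (a \<bullet> cvec) (b \<bullet> cvec))"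
  assumes m: "1 \<le> m" and eta: "0 < eta" and init: "(a \<bullet> cvec, b \<bullet> cvec) \<noteq> (0, 0)"
    and "1152 * (real m + 3)^2 * eta \<le> 1"
    and "48 * (real m + 3) * real T * eta^2 \<le> 1"
    and "132 * (real m + 3) \<le> real T * eta"
  shows "delayed_oftrl_horizon Z m eta T r"
proof (intro delayed_oftrl_horizon.intro delayed_oftrl_horizon_axioms.intro)
  show "delayed_oftrl Z m eta"
    unfolding Z_def using eta m by (rule delayed_oftrl_traj)
  show "cmod (Z 0) = r"
    by (simp add: Z_def r_def)
  show "0 < r"
    using init by (simp add: r_def complex_eq_iff)
qed (use assms in auto)

lemma RegTot_lower_bound:
  fixes m T :: nat and eta :: real and a b :: "real^2"
  defines "r \<equiv> cmod (Complex (a \<bullet> cvec) (b \<bullet> cvec))"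
  assumes hyps: "1 \<le> m" "0 < eta" "(a \<bullet> cvec, b \<bullet> cvec) \<noteq> (0, 0)"
    "1152 * (real m + 3)^2 * eta \<le> 1"
    "48 * (real m + 3) * real T * eta^2 \<le> 1"
    "132 * (real m + 3) \<le> real T * eta"
  shows "real T * eta * r^2 / 384 \<le> RegTot m 1 eta a b T"
proof -
  define X where "X = oftrl_traj m 1 eta a b"
  define Z where "Z = (\<lambda>k. Complex (fst (X (Suc k)) \<bullet> cvec) (snd (X (Suc k)) \<bullet> cvec))"
  interpret delayed_oftrl_horizon Z m eta T r
    unfolding Z_def X_def r_def using hyps by (rule delayed_oftrl_horizon_traj)
  have shift: "(\<Sum>t = 1..T. f t) = (\<Sum>k<T. f (Suc k))" for f :: "nat \<Rightarrow> real"
    by (simp add: sum.atLeast1_atMost_eq)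
  define P where "P = (\<Sum>t = 1..T. fst (X t) \<bullet> cvec)"
  define Q where "Q = (\<Sum>t = 1..T. snd (X t) \<bullet> cvec)"
  define R1 where "R1 = (\<Sum>t = 1..T. l1norm (fst (X t))) / real T"
  define R2 where "R2 = (\<Sum>t = 1..T. l1norm (snd (X t))) / real T"
  have "r / 16 \<le> R1" "r / 16 \<le> R2"
  proof -
    have "0 < real T"
      using delay_lt_horizon by simp
    moreover have "(\<Sum>k<T. \<bar>Re (Z k)\<bar>) \<le> (\<Sum>t = 1..T. l1norm (fst (X t)))"
      and "(\<Sum>k<T. \<bar>Im (Z k)\<bar>) \<le> (\<Sum>t = 1..T. l1norm (snd (X t)))"
      unfolding shift Z_def by (auto intro!: sum_mono abs_inner_cvec_le_l1norm)
    ultimately show "r / 16 \<le> R1" "r / 16 \<le> R2"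
      unfolding R1_def R2_def using sum_abs_Re_Im_ge by (simp_all add: field_simps)
  qed
  have "real T * eta * r / 24 \<le> \<bar>Q\<bar> + \<bar>P\<bar>"
  proof -
    have "Re (\<Sum>k<T. Z k) = P" "Im (\<Sum>k<T. Z k) = Q"
      unfolding shift Z_def P_def Q_def by simp_all
    then show ?thesis
      using norm_sum_ge cmod_le[of "\<Sum>k<T. Z k"] by simp
  qed
  then have "(r / 16) * (real T * eta * r / 24) \<le> (r / 16) * (\<bar>Q\<bar> + \<bar>P\<bar>)"
    using r_pos by (intro mult_left_mono) auto
  then have "real T * eta * r^2 / 384 \<le> (r / 16) * (\<bar>Q\<bar> + \<bar>P\<bar>)"
    by (simp add: power2_eq_square)
  also have "\<dots> = (r / 16) * \<bar>Q\<bar> + (r / 16) * \<bar>P\<bar>"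
    by (simp only: distrib_left)
  also have "\<dots> \<le> R1 * \<bar>Q\<bar> + R2 * \<bar>P\<bar>"
    using \<open>r / 16 \<le> R1\<close> \<open>r / 16 \<le> R2\<close> by (intro add_mono mult_right_mono) auto
  also have "\<dots> \<le> RegTot m 1 eta a b T"
    unfolding R1_def R2_def P_def Q_def X_def by (rule RegTot_ge)
  finally show ?thesis .
qed

lemma sqrt_schedule:
  fixes w c :: real and T :: nat
  assumes w: "1 \<le> w" and c: "0 < c" "c \<le> 1 / (48 * w)" and T: "1152 * w^2 / c \<le> sqrt (real T)"
  shows "0 < c / sqrt (real T)"
    and "1152 * w^2 * (c / sqrt (real T)) \<le> 1"
    and "48 * w * real T * (c / sqrt (real T))^2 \<le> 1"
    and "132 * w \<le> real T * (c / sqrt (real T))"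
    and "real T * (c / sqrt (real T)) = c * sqrt (real T)"
proof -
  define s where "s = sqrt (real T)"
  have "0 < 1152 * w^2 / c"
    using w c by simp
  then have "0 < s"
    using T unfolding s_def by linarith
  have "real T = s^2"
    unfolding s_def by simp
  note s = \<open>0 < s\<close> this
  have "48 * w * c \<le> 1"
    using w c by (simp add: field_simps)
  moreover have "c \<le> 48 * w * c"
    using w c by simp
  ultimately have "c \<le> 1"
    by linarith
  have "1152 * w^2 \<le> c * s"
    using T c unfolding s_def by (simp add: field_simps)
  show "0 < c / sqrt (real T)"
    using c s unfolding s_def by simp
  show T_eta: "real T * (c / sqrt (real T)) = c * sqrt (real T)"
    using s unfolding s_def[symmetric] by (simp add: field_simps power2_eq_square)
  have "1152 * w^2 * (c / s) \<le> (c * s) * (c / s)"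
    using \<open>1152 * w^2 \<le> c * s\<close> c s by (intro mult_right_mono) auto
  also have "\<dots> = c * c"
    using s by simp
  also have "\<dots> \<le> 1"
    using c \<open>c \<le> 1\<close> by (simp add: mult_le_one)
  finally show "1152 * w^2 * (c / sqrt (real T)) \<le> 1"
    unfolding s_def .
  have "48 * w * real T * (c / s)^2 = (48 * w * c) * c"
    using s by (simp add: field_simps power2_eq_square)
  also have "\<dots> \<le> 1 * 1"
    using \<open>48 * w * c \<le> 1\<close> \<open>c \<le> 1\<close> c by (intro mult_mono) auto
  finally show "48 * w * real T * (c / sqrt (real T))^2 \<le> 1"
    unfolding s_def by simp
  have "132 * w \<le> 1152 * w^2"
    using w by (simp add: power2_eq_square)
  then show "132 * w \<le> real T * (c / sqrt (real T))"
    unfolding T_eta using \<open>1152 * w^2 \<le> c * s\<close> unfolding s_def by linarith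
qed

theorem theorem1:
  fixes m :: nat and a b :: "real^2"
  assumes "m \<ge> 1"
    and "(a \<bullet> cvec, b \<bullet> cvec) \<noteq> (0, 0)"
  shows "\<exists>c0>0. \<forall>c. 0 < c \<and> c \<le> c0 \<longrightarrow>
           (\<exists>\<kappa>>0. \<exists>T0. \<forall>T\<ge>T0.
              RegTot m 1 (c / sqrt (real T)) a b T \<ge> \<kappa> * sqrt (real T))"
proof -
  define w where "w = real m + 3"
  define r where "r = cmod (Complex (a \<bullet> cvec) (b \<bullet> cvec))"
  have "1 \<le> w" "0 < r"
    using assms(2) by (auto simp: w_def r_def complex_eq_iff)
  show ?thesis
  proof (rule exI[of _ "1 / (48 * w)"], intro conjI allI impI)
    fix c :: real assume c: "0 < c \<and> c \<le> 1 / (48 * w)"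
    show "\<exists>\<kappa>>0. \<exists>T0. \<forall>T\<ge>T0. RegTot m 1 (c / sqrt (real T)) a b T \<ge> \<kappa> * sqrt (real T)"
    proof (rule exI[of _ "c * r^2 / 384"], intro conjI exI[of _ "nat \<lceil>(1152 * w^2 / c)^2\<rceil>"] allI impI)
      fix T :: nat assume "nat \<lceil>(1152 * w^2 / c)^2\<rceil> \<le> T"
      then have "(1152 * w^2 / c)^2 \<le> real T"
        using real_nat_ceiling_ge[of "(1152 * w^2 / c)^2"] by linarith
      then have "1152 * w^2 / c \<le> sqrt (real T)"
        by (rule real_le_rsqrt)
      note schedule = sqrt_schedule[OF \<open>1 \<le> w\<close> c[THEN conjunct1] c[THEN conjunct2] this]
      have "real T * (c / sqrt (real T)) * r^2 / 384 \<le> RegTot m 1 (c / sqrt (real T)) a b T"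
        using RegTot_lower_bound[OF assms(1) schedule(1) assms(2) schedule(2-4)[unfolded w_def]]
        unfolding r_def .
      then show "c * r^2 / 384 * sqrt (real T) \<le> RegTot m 1 (c / sqrt (real T)) a b T"
        unfolding schedule(5) by (simp add: field_simps)
    qed (use c \<open>0 < r\<close> in simp)
  qed (use \<open>1 \<le> w\<close> in simp)
qed

end
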